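(* Let $(F_S,\iota)$ be an embedded local étale algebra and let $\Gamma\subseteq\mathrm{PGL}_2(F_S)$ be a subgroup whose set of limit points $\mathcal L^S_\Gamma\subseteq\mathbb P^1(\mathbf C_S)$ is empty. Then $\Gamma$ is finite.
   Context: Fix a prime $p$ and let $\mathbf{C}$ be the completion of an algebraic closure of $\mathbb{Q}_p$ or of $\mathbb{F}_p((T))$. An embedded local étale algebra $(F_S,\iota)$ consists of a finite non-empty set $S$, non-Archimedean local fields $F_\mathfrak p$ ($\mathfrak p\in S$) of residue characteristic $p$ and of the same characteristic as $\mathbf C$, and field embeddings $\iota_\mathfrak p\colon F_\mathfrak p\hookrightarrow\mathbf C$; $F_S=\prod_\mathfrak pF_\mathfrak p$. The group $\mathrm{PGL}_2(F_S)=\prod_\mathfrak p\mathrm{PGL}_2(F_\mathfrak p)$ acts componentwise via $\iota$ by Möbius transformations on $\mathbb P^1(\mathbf C_S):=\prod_{\mathfrak p\in S}\mathbb P^1(\mathbf C)$ (product topology). For a subgroup $\Gamma\subseteq\mathrm{PGL}_2(F_S)$, $\mathcal L^S_\Gamma$ is the set of $x\in\mathbb P^1(\mathbf C_S)$ such that there exist $y\in\mathbb P^1(\mathbf C_S)$ and pairwise distinct elements $\gamma_j\in\Gamma$ ($j\ge1$) with $\gamma_j(y)\to x$. *)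

theory Defs
  imports "HOL-Computational_Algebra.Polynomial" "HOL-Algebra.Group"
begin

definition nonarch_absv :: "('c::field \<Rightarrow> real) \<Rightarrow> bool" where
  "nonarch_absv absv \<longleftrightarrow>
     (\<forall>x. 0 \<le> absv x) \<and> (\<forall>x. absv x = 0 \<longleftrightarrow> x = 0) \<and>
     (\<forall>x y. absv (x * y) = absv x * absv y) \<and>
     (\<forall>x y. absv (x + y) \<le> max (absv x) (absv y))"

definition absv_tendsto :: "('c::field \<Rightarrow> real) \<Rightarrow> (nat \<Rightarrow> 'c) \<Rightarrow> 'c \<Rightarrow> bool" where
  "absv_tendsto absv X L \<longleftrightarrow> (\<forall>e>0. \<exists>N. \<forall>n\<ge>N. absv (X n - L) < e)"

definition absv_complete :: "('c::field \<Rightarrow> real) \<Rightarrow> bool" where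
  "absv_complete absv \<longleftrightarrow>
     (\<forall>X. (\<forall>e>0. \<exists>N. \<forall>m\<ge>N. \<forall>n\<ge>N. absv (X m - X n) < e) \<longrightarrow> (\<exists>L. absv_tendsto absv X L))"

definition alg_closed_field :: "'c::field itself \<Rightarrow> bool" where
  "alg_closed_field _ \<longleftrightarrow> (\<forall>q :: 'c poly. degree q > 0 \<longrightarrow> (\<exists>x. poly q x = 0))"

definition is_subfield :: "'c::field set \<Rightarrow> bool" where
  "is_subfield K \<longleftrightarrow> 0 \<in> K \<and> 1 \<in> K \<and> (\<forall>x\<in>K. \<forall>y\<in>K. x + y \<in> K \<and> x - y \<in> K \<and> x * y \<in> K)
     \<and> (\<forall>x\<in>K. x \<noteq> 0 \<longrightarrow> inverse x \<in> K)"

text \<open>A non-Archimedean local field sitting (topologically) inside C: a closed subfield,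
  non-discrete (nontrivially valued) and locally compact (its closed unit ball is
  (sequentially) compact).\<close>
definition local_subfield :: "('c::field \<Rightarrow> real) \<Rightarrow> 'c set \<Rightarrow> bool" where
  "local_subfield absv K \<longleftrightarrow> is_subfield K \<and>
     (\<forall>X L. (\<forall>n. X n \<in> K) \<longrightarrow> absv_tendsto absv X L \<longrightarrow> L \<in> K) \<and>
     (\<exists>x\<in>K. 0 < absv x \<and> absv x < 1) \<and>
     (\<forall>X. (\<forall>n. X n \<in> K \<and> absv (X n) \<le> 1) \<longrightarrow>
        (\<exists>(r::nat \<Rightarrow> nat) L. strict_mono r \<and> L \<in> K \<and> absv L \<le> 1 \<and> absv_tendsto absv (X \<circ> r) L))"

definition algebraic_over :: "'c::field set \<Rightarrow> 'c \<Rightarrow> bool" where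
  "algebraic_over K x \<longleftrightarrow> (\<exists>q :: 'c poly. q \<noteq> 0 \<and> (\<forall>i. coeff q i \<in> K) \<and> poly q x = 0)"

text \<open>(C, absv) is (up to isometric isomorphism and rescaling of the absolute value) the
  completion of an algebraic closure of Q_p or of F_p((T)): a complete, algebraically closed,
  non-Archimedean valued field of residue characteristic p, in which the algebraic closure of
  some local field is dense.\<close>
definition is_C_field :: "nat \<Rightarrow> ('c::field \<Rightarrow> real) \<Rightarrow> bool" where
  "is_C_field p absv \<longleftrightarrow> prime p \<and> nonarch_absv absv \<and> absv_complete absv \<and>
     alg_closed_field TYPE('c) \<and> absv (of_nat p) < 1 \<and>
     (\<exists>K0. local_subfield absv K0 \<and>
        (\<forall>x. \<forall>e>0. \<exists>y. algebraic_over K0 y \<and> absv (x - y) < e))"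

text \<open>A point of P^1(C) is Some z (z in C) or None (the point at infinity).\<close>

definition mobius :: "'c::field \<Rightarrow> 'c \<Rightarrow> 'c \<Rightarrow> 'c \<Rightarrow> 'c option \<Rightarrow> 'c option" where
  "mobius a b c d w = (case w of
      None \<Rightarrow> (if c \<noteq> 0 then Some (a / c) else None)
    | Some z \<Rightarrow> (if c * z + d \<noteq> 0 then Some ((a * z + b) / (c * z + d)) else None))"

text \<open>PGL_2(K) acting on P^1(C) (the action is faithful, so we identify an element
  with the transformation it induces).\<close>
definition PGL2 :: "'c::field set \<Rightarrow> ('c option \<Rightarrow> 'c option) set" where
  "PGL2 K = {mobius a b c d | a b c d. a \<in> K \<and> b \<in> K \<and> c \<in> K \<and> d \<in> K \<and> a * d - b * c \<noteq> 0}"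

text \<open>PGL_2(F_S) = product over S; components outside S are the identity.\<close>
definition PGL2S :: "'i set \<Rightarrow> ('i \<Rightarrow> 'c::field set) \<Rightarrow> ('i \<Rightarrow> 'c option \<Rightarrow> 'c option) set" where
  "PGL2S S K = {g. (\<forall>q\<in>S. g q \<in> PGL2 (K q)) \<and> (\<forall>q. q \<notin> S \<longrightarrow> g q = id)}"

definition PGL2S_group :: "'i set \<Rightarrow> ('i \<Rightarrow> 'c::field set) \<Rightarrow> ('i \<Rightarrow> 'c option \<Rightarrow> 'c option) monoid" where
  "PGL2S_group S K = \<lparr>carrier = PGL2S S K, mult = (\<lambda>g h. \<lambda>q. g q \<circ> h q), one = (\<lambda>q. id)\<rparr>"

definition P1S :: "'i set \<Rightarrow> ('i \<Rightarrow> 'c option) set" where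
  "P1S S = {x. \<forall>q. q \<notin> S \<longrightarrow> x q = None}"

definition actS :: "('i \<Rightarrow> 'c option \<Rightarrow> 'c option) \<Rightarrow> ('i \<Rightarrow> 'c option) \<Rightarrow> ('i \<Rightarrow> 'c option)" where
  "actS g x = (\<lambda>q. g q (x q))"

text \<open>Sequential convergence in P^1(C) (topology induced by absv; neighbourhoods of infinity
  are complements of bounded sets).\<close>
definition P1_tendsto :: "('c::field \<Rightarrow> real) \<Rightarrow> (nat \<Rightarrow> 'c option) \<Rightarrow> 'c option \<Rightarrow> bool" where
  "P1_tendsto absv X x = (case x of
      Some z \<Rightarrow> (\<forall>e>0. \<exists>N. \<forall>n\<ge>N. \<exists>w. X n = Some w \<and> absv (w - z) < e)
    | None \<Rightarrow> (\<forall>M. \<exists>N. \<forall>n\<ge>N. X n = None \<or> (\<exists>w. X n = Some w \<and> M < absv w)))"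

definition P1S_tendsto :: "('c::field \<Rightarrow> real) \<Rightarrow> 'i set \<Rightarrow> (nat \<Rightarrow> 'i \<Rightarrow> 'c option) \<Rightarrow> ('i \<Rightarrow> 'c option) \<Rightarrow> bool" where
  "P1S_tendsto absv S X x \<longleftrightarrow> (\<forall>q\<in>S. P1_tendsto absv (\<lambda>n. X n q) (x q))"

definition limit_set :: "('c::field \<Rightarrow> real) \<Rightarrow> 'i set \<Rightarrow> ('i \<Rightarrow> 'c option \<Rightarrow> 'c option) set \<Rightarrow> ('i \<Rightarrow> 'c option) set" where
  "limit_set absv S \<Gamma> = {x \<in> P1S S. \<exists>y \<in> P1S S. \<exists>\<gamma> :: nat \<Rightarrow> ('i \<Rightarrow> 'c option \<Rightarrow> 'c option).
       inj \<gamma> \<and> (\<forall>j. \<gamma> j \<in> \<Gamma>) \<and> P1S_tendsto absv S (\<lambda>j. actS (\<gamma> j) y) x}"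

end

theory Submission
  imports Defs "HOL-Library.Infinite_Set"
begin

text \<open>An infinite \<Gamma> contains an injective sequence of elements g_j. Each P^1(F_q) is
  sequentially compact: its finite points either lie in the closed unit ball of F_q, which is
  compact, or are inverses of nonzero points of that ball, and inversion is continuous on P^1.
  The orbit of the point at infinity under the g_j lies in the finite product of the P^1(F_q),
  so it has a convergent subsequence, whose limit is a limit point of \<Gamma>. Of C only its
  non-Archimedean absolute value is needed.\<close>

lemma nonarch_absv_one:
  assumes "nonarch_absv absv" shows "absv (1::'c::field) = 1"
proof -
  have "absv 1 = absv 1 * absv (1::'c)" "absv (1::'c) \<noteq> 0"
    using assms unfolding nonarch_absv_def by (metis mult_1, simp)
  then show ?thesis by simp
qed

lemma nonarch_absv_zero_iff:
  assumes "nonarch_absv absv" shows "absv (x::'c::field) = 0 \<longleftrightarrow> x = 0"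
  using assms unfolding nonarch_absv_def by blast

lemma nonarch_absv_pos:
  assumes "nonarch_absv absv" "(x::'c::field) \<noteq> 0" shows "0 < absv x"
proof -
  have "0 \<le> absv x" "absv x \<noteq> 0" using assms unfolding nonarch_absv_def by auto
  then show ?thesis by simp
qed

lemma nonarch_absv_minus_commute:
  assumes "nonarch_absv absv" shows "absv ((a::'c::field) - b) = absv (b - a)"
proof -
  have mult: "\<And>x y. absv (x * y) = absv x * absv (y::'c)" and nonneg: "\<And>x. 0 \<le> absv (x::'c)"
    using assms unfolding nonarch_absv_def by blast+
  have "absv (-1::'c) * absv (-1) = 1"
    using mult[of "-1" "-1"] nonarch_absv_one[OF assms] by simp
  then have "absv (-1::'c) = 1"
    using nonneg[of "-1"] by (metis abs_of_nonneg abs_square_eq_1 power2_eq_square)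
  then show ?thesis using mult[of "-1" "b - a"] by simp
qed

lemma nonarch_absv_inverse:
  assumes "nonarch_absv absv" "(x::'c::field) \<noteq> 0" shows "absv (inverse x) = inverse (absv x)"
proof -
  have "absv (inverse x) * absv x = 1"
    using assms nonarch_absv_one[OF assms(1)] unfolding nonarch_absv_def by (metis left_inverse)
  then show ?thesis by (metis inverse_unique mult.commute)
qed

lemma nonarch_absv_le_of_close:
  assumes "nonarch_absv absv" "absv ((w::'c::field) - L) < absv L" shows "absv L \<le> absv w"
proof -
  have "absv L \<le> max (absv (L - w)) (absv w)"
    using assms(1) unfolding nonarch_absv_def by (metis diff_add_cancel)
  then show ?thesis using assms nonarch_absv_minus_commute[OF assms(1), of L w] by linarith
qed

lemma nonarch_absv_inverse_diff:
  assumes "nonarch_absv absv" "(w::'c::field) \<noteq> 0" "L \<noteq> 0"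
  shows "absv (inverse w - inverse L) = absv (w - L) / (absv w * absv L)"
proof -
  have "inverse w - inverse L = (L - w) * inverse w * inverse L"
    using assms(2,3) by (simp add: field_simps)
  then show ?thesis
    using assms nonarch_absv_inverse[OF assms(1)] nonarch_absv_minus_commute[OF assms(1), of L w]
    unfolding nonarch_absv_def by (simp add: divide_inverse)
qed

lemma P1_tendsto_eventually:
  "P1_tendsto absv X x \<longleftrightarrow> (case x of
      Some z \<Rightarrow> (\<forall>e>0. eventually (\<lambda>n. \<exists>w. X n = Some w \<and> absv (w - z) < e) sequentially)
    | None \<Rightarrow> (\<forall>M. eventually (\<lambda>n. X n = None \<or> (\<exists>w. X n = Some w \<and> M < absv w)) sequentially))"
  unfolding P1_tendsto_def eventually_sequentially by (simp split: option.split)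

lemma P1_tendsto_subseq:
  assumes "P1_tendsto absv X x" "strict_mono r"
  shows "P1_tendsto absv (X \<circ> r) x"
  using assms(1) unfolding P1_tendsto_eventually
  by (cases x) (auto dest: eventually_subseq[OF assms(2)])

lemma P1_tendsto_Some_iff:
  "P1_tendsto absv (\<lambda>n. Some (X n)) (Some z) \<longleftrightarrow> absv_tendsto absv X z"
  unfolding P1_tendsto_def absv_tendsto_def by simp

lemma P1_tendsto_inverse_zero:
  assumes "nonarch_absv absv" "absv_tendsto absv W 0" "\<And>n. W n \<noteq> 0"
  shows "P1_tendsto absv (\<lambda>n. Some (inverse (W n))) None"
  unfolding P1_tendsto_def
proof (simp, intro allI)
  fix M :: real
  have "0 < inverse (\<bar>M\<bar> + 1)" by (simp add: add_nonneg_pos)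
  then obtain N where N: "\<And>n. n \<ge> N \<Longrightarrow> absv (W n) < inverse (\<bar>M\<bar> + 1)"
    using assms(2) unfolding absv_tendsto_def by (metis diff_zero)
  have "M < absv (inverse (W n))" if "n \<ge> N" for n
  proof -
    have "\<bar>M\<bar> + 1 < inverse (absv (W n))"
      using less_imp_inverse_less[OF N[OF that] nonarch_absv_pos[OF assms(1,3)]] by simp
    then show ?thesis using nonarch_absv_inverse[OF assms(1,3)] by simp
  qed
  then show "\<exists>N. \<forall>n\<ge>N. M < absv (inverse (W n))" by blast
qed

lemma P1_tendsto_inverse_nonzero:
  assumes "nonarch_absv absv" "absv_tendsto absv W L" "L \<noteq> 0" "\<And>n. W n \<noteq> 0"
  shows "P1_tendsto absv (\<lambda>n. Some (inverse (W n))) (Some (inverse L))"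
  unfolding P1_tendsto_Some_iff absv_tendsto_def
proof (intro allI impI)
  fix e :: real assume "0 < e"
  have aL: "0 < absv L" using nonarch_absv_pos[OF assms(1,3)] .
  then obtain N where N: "\<And>n. n \<ge> N \<Longrightarrow> absv (W n - L) < min (absv L) (e * absv L * absv L)"
    using assms(2) \<open>0 < e\<close> unfolding absv_tendsto_def by (metis min_less_iff_conj mult_pos_pos)
  have "absv (inverse (W n) - inverse L) < e" if "n \<ge> N" for n
  proof -
    have close: "absv (W n - L) < absv L" "absv (W n - L) < e * (absv L * absv L)"
      using N[OF that] by (simp_all add: mult.assoc)
    have "absv L * absv L \<le> absv (W n) * absv L"
      using nonarch_absv_le_of_close[OF assms(1) close(1)] aL by simp
    then have "absv (W n - L) < e * (absv (W n) * absv L)"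
      using close(2) \<open>0 < e\<close> by (smt (verit) mult_left_mono)
    moreover have "0 < absv (W n) * absv L"
      using nonarch_absv_le_of_close[OF assms(1) close(1)] aL by simp
    ultimately show ?thesis
      using nonarch_absv_inverse_diff[OF assms(1,4) assms(3)] by (simp add: divide_less_eq)
  qed
  then show "\<exists>N. \<forall>n\<ge>N. absv (inverse (W n) - inverse L) < e" by blast
qed

definition P1 :: "'c set \<Rightarrow> 'c option set" where
  "P1 K = insert None (Some ` K)"

text \<open>Relative sequential compactness: the limit need not lie in A.\<close>
definition P1_seq_precompact :: "('c::field \<Rightarrow> real) \<Rightarrow> 'c option set \<Rightarrow> bool" where
  "P1_seq_precompact absv A \<longleftrightarrow>
     (\<forall>X. range X \<subseteq> A \<longrightarrow> (\<exists>(r :: nat \<Rightarrow> nat) x. strict_mono r \<and> P1_tendsto absv (X \<circ> r) x))"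

lemma P1_seq_precompact_subset:
  "A \<subseteq> B \<Longrightarrow> P1_seq_precompact absv B \<Longrightarrow> P1_seq_precompact absv A"
  unfolding P1_seq_precompact_def by blast

lemma P1_seq_precompact_Un:
  assumes "P1_seq_precompact absv A" "P1_seq_precompact absv B"
  shows "P1_seq_precompact absv (A \<union> B)"
  unfolding P1_seq_precompact_def
proof (intro allI impI)
  fix X :: "nat \<Rightarrow> _" assume X: "range X \<subseteq> A \<union> B"
  have conv: "\<exists>r x. strict_mono r \<and> P1_tendsto absv (X \<circ> r) x"
    if inf: "infinite {n. X n \<in> C}" and C: "P1_seq_precompact absv C" for C
  proof -
    obtain r :: "nat \<Rightarrow> nat" where r: "strict_mono r" "\<And>n. X (r n) \<in> C"
      using infinite_enumerate[OF inf] by blast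
    then obtain r' x where "strict_mono r'" "P1_tendsto absv (X \<circ> r \<circ> r') x"
      using C unfolding P1_seq_precompact_def by (metis image_subsetI comp_apply)
    then show ?thesis using r(1) strict_mono_o by (metis comp_assoc)
  qed
  have "{n. X n \<in> A} \<union> {n. X n \<in> B} = UNIV" using X by blast
  then have "infinite {n. X n \<in> A} \<or> infinite {n. X n \<in> B}"
    by (metis finite_UnI infinite_UNIV_nat)
  then show "\<exists>r x. strict_mono r \<and> P1_tendsto absv (X \<circ> r) x" using conv assms by blast
qed

lemma P1_seq_precompact_infinity:
  fixes absv :: "'c::field \<Rightarrow> real" shows "P1_seq_precompact absv {None}"
  unfolding P1_seq_precompact_def
proof (intro allI impI)
  fix X :: "nat \<Rightarrow> 'c option" assume "range X \<subseteq> {None}"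
  then have "\<And>n. X n = None" by auto
  then have "P1_tendsto absv (X \<circ> id) None" unfolding P1_tendsto_def by simp
  then show "\<exists>(r :: nat \<Rightarrow> nat) x. strict_mono r \<and> P1_tendsto absv (X \<circ> r) x"
    using strict_mono_id by blast
qed

lemma P1_seq_precompact_unit_ball:
  assumes "local_subfield absv K"
  shows "P1_seq_precompact absv (Some ` {w \<in> K. absv w \<le> 1})"
  unfolding P1_seq_precompact_def
proof (intro allI impI)
  fix X :: "nat \<Rightarrow> _" assume X: "range X \<subseteq> Some ` {w \<in> K. absv w \<le> 1}"
  define W where "W n = the (X n)" for n
  have X_W: "X n = Some (W n)" and "W n \<in> K \<and> absv (W n) \<le> 1" for n
    using range_subsetD[OF X, of n] unfolding W_def by auto
  moreover obtain r L where "strict_mono r" "absv_tendsto absv (W \<circ> r) L"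
    using assms calculation(2) unfolding local_subfield_def by blast
  moreover have "X \<circ> r = (\<lambda>n. Some ((W \<circ> r) n))" using X_W by auto
  ultimately show "\<exists>r x. strict_mono r \<and> P1_tendsto absv (X \<circ> r) x"
    using P1_tendsto_Some_iff[of absv "W \<circ> r" L] by (auto simp: comp_def)
qed

lemma P1_seq_precompact_outside_unit_ball:
  assumes "nonarch_absv absv" "local_subfield absv K"
  shows "P1_seq_precompact absv (Some ` {w \<in> K. 1 < absv w})"
  unfolding P1_seq_precompact_def
proof (intro allI impI)
  fix X :: "nat \<Rightarrow> _" assume X: "range X \<subseteq> Some ` {w \<in> K. 1 < absv w}"
  define W where "W n = inverse (the (X n))" for n
  have W: "X n = Some (inverse (W n)) \<and> W n \<noteq> 0 \<and> W n \<in> K \<and> absv (W n) \<le> 1" for n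
  proof -
    obtain v where v: "X n = Some v" "v \<in> K" "1 < absv v" using range_subsetD[OF X, of n] by blast
    then have "v \<noteq> 0" using nonarch_absv_zero_iff[OF assms(1), of v] by auto
    then show ?thesis
      using v assms nonarch_absv_inverse[OF assms(1)]
      unfolding W_def local_subfield_def is_subfield_def by (auto simp: inverse_le_1_iff)
  qed
  then obtain r L where r: "strict_mono r" "absv_tendsto absv (W \<circ> r) L"
    using assms(2) unfolding local_subfield_def by blast
  have X_r: "X \<circ> r = (\<lambda>n. Some (inverse ((W \<circ> r) n)))" and W_r: "\<And>n. (W \<circ> r) n \<noteq> 0"
    using W by auto
  have "P1_tendsto absv (X \<circ> r) (if L = 0 then None else Some (inverse L))"
  proof (cases "L = 0")
    case True
    show ?thesis
      unfolding X_r using P1_tendsto_inverse_zero[OF assms(1) r(2)[unfolded True] W_r] True by simp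
  next
    case False
    show ?thesis
      unfolding X_r using P1_tendsto_inverse_nonzero[OF assms(1) r(2) False W_r] False by simp
  qed
  then show "\<exists>r x. strict_mono r \<and> P1_tendsto absv (X \<circ> r) x" using r(1) by blast
qed

lemma P1_seq_precompact_P1:
  assumes "nonarch_absv absv" "local_subfield absv K"
  shows "P1_seq_precompact absv (P1 K)"
proof -
  have "P1 K \<subseteq> {None} \<union> Some ` {w \<in> K. absv w \<le> 1} \<union> Some ` {w \<in> K. 1 < absv w}"
    unfolding P1_def by force
  then show ?thesis
    using P1_seq_precompact_Un[OF P1_seq_precompact_Un[OF P1_seq_precompact_infinity
        P1_seq_precompact_unit_ball[OF assms(2)]] P1_seq_precompact_outside_unit_ball[OF assms]]
    by (rule P1_seq_precompact_subset)
qed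

lemma P1S_subseq_tendsto:
  fixes Y :: "nat \<Rightarrow> 'i \<Rightarrow> 'c::field option"
  assumes "finite S" "\<forall>q\<in>S. P1_seq_precompact absv (A q)" "\<forall>n. \<forall>q\<in>S. Y n q \<in> A q"
  shows "\<exists>r. \<exists>x\<in>P1S S. strict_mono r \<and> P1S_tendsto absv S (\<lambda>n. Y (r n)) x"
  using assms
proof (induction S rule: finite_induct)
  case empty
  show ?case
    by (intro exI[of _ "id :: nat \<Rightarrow> nat"] bexI[of _ "\<lambda>q::'i. None :: 'c option"])
      (simp_all add: strict_mono_def P1S_def P1S_tendsto_def)
next
  case (insert q F)
  then obtain r x where r: "strict_mono r" "x \<in> P1S F" "P1S_tendsto absv F (\<lambda>n. Y (r n)) x"
    by auto
  obtain r' L where r': "strict_mono r'" "P1_tendsto absv ((\<lambda>n. Y (r n) q) \<circ> r') L"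
    using insert.prems unfolding P1_seq_precompact_def by (metis image_subsetI insertI1)
  have "P1_tendsto absv (\<lambda>n. Y ((r \<circ> r') n) q') ((x(q := L)) q')" if "q' \<in> F" for q'
    using P1_tendsto_subseq[OF _ r'(1)] r(3) that insert.hyps(2)
    unfolding P1S_tendsto_def by (auto simp: comp_def)
  then have "P1S_tendsto absv (insert q F) (\<lambda>n. Y ((r \<circ> r') n)) (x(q := L))"
    using r'(2) unfolding P1S_tendsto_def by (simp add: comp_def)
  moreover have "x(q := L) \<in> P1S (insert q F)" using r(2) unfolding P1S_def by simp
  ultimately show ?case using r(1) r'(1) strict_mono_o by blast
qed

lemma mobius_infinity_in_P1:
  assumes "is_subfield K" "g \<in> PGL2 K"
  shows "g None \<in> P1 K"
proof -
  obtain a b c d where "g = mobius a b c d" "a \<in> K" "c \<in> K"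
    using assms(2) unfolding PGL2_def by blast
  moreover have "a / c \<in> K" if "c \<noteq> 0"
    using assms(1) calculation that unfolding is_subfield_def by (simp add: divide_inverse)
  ultimately show ?thesis unfolding P1_def mobius_def by auto
qed

theorem proposition2p3:
  fixes p :: nat and absv :: "'c::field \<Rightarrow> real"
    and S :: "'i set" and K :: "'i \<Rightarrow> 'c set"
    and \<Gamma> :: "('i \<Rightarrow> 'c option \<Rightarrow> 'c option) set"
  assumes "is_C_field p absv"
    and "finite S" and "S \<noteq> {}"
    and "\<forall>q\<in>S. local_subfield absv (K q)"
    and "subgroup \<Gamma> (PGL2S_group S K)"
    and "limit_set absv S \<Gamma> = {}"
  shows "finite \<Gamma>"
proof (rule ccontr)
  assume "infinite \<Gamma>"
  then obtain g :: "nat \<Rightarrow> _" where g: "inj g" "range g \<subseteq> \<Gamma>"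
    using infinite_countable_subset by blast
  have "g n \<in> PGL2S S K" for n
    using g(2) assms(5) unfolding subgroup_def PGL2S_group_def by auto
  then have orbit: "\<forall>n. \<forall>q\<in>S. actS (g n) (\<lambda>q. None) q \<in> P1 (K q)"
    using assms(4) mobius_infinity_in_P1 unfolding PGL2S_def actS_def local_subfield_def by blast
  have "nonarch_absv absv" using assms(1) unfolding is_C_field_def by simp
  then obtain r x where "x \<in> P1S S" "strict_mono r"
      "P1S_tendsto absv S (\<lambda>n. actS (g (r n)) (\<lambda>q. None)) x"
    using P1S_subseq_tendsto[OF assms(2) _ orbit] P1_seq_precompact_P1 assms(4) by blast
  moreover have "(\<lambda>q. None) \<in> P1S S" "inj (g \<circ> r)" "\<forall>j. (g \<circ> r) j \<in> \<Gamma>"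
    using g \<open>strict_mono r\<close> by (auto simp: P1S_def inj_compose strict_mono_imp_inj_on)
  ultimately have "x \<in> limit_set absv S \<Gamma>"
    unfolding limit_set_def comp_def by blast
  then show False using assms(6) by simp
qed

end
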